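(* Let $X$ be a Hausdorff $k$-space and $A$ a full unital subalgebra of $C(X)$; when $\mathbb{K}=\mathbb{C}$ assume moreover that $A$ is self-adjoint ($f\in A\Rightarrow\overline f\in A$). Let $\tau$ be a locally convex topology on $A$ making the inclusion $(A,\tau)\hookrightarrow C(X)$ continuous, and let $\chi_c(A)$ be the set of $\tau$-continuous characters (unital multiplicative linear functionals) of $A$ with the subspace topology of $A'_c$, i.e. the topology of uniform convergence on precompact subsets of $(A,\tau)$. If $A_{[0,1]}$ separates compact sets and closed sets in $X$, then the map $\delta:X\to\chi_c(A)$, $x\mapsto\delta_x$ ($\delta_x(f)=f(x)$) is well defined and is a homeomorphism onto its image. If in addition $\tau$ is compactly localized, then $\delta$ is surjective, hence a homeomorphism $X\to\chi_c(A)$.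
   Context: A Hausdorff space is a $k$-space if every subset meeting each compact set in a relatively closed set is closed. $C(X)$ is the algebra of continuous scalar functions with the topology of uniform convergence on compact sets. A unital subalgebra $A\subseteq C(X)$ is full if whenever $f\in A$ is invertible in $C(X)$ (i.e. vanishes nowhere), $f^{-1}\in A$. $A_{[0,1]}=\{f\in A: f(x)\in[0,1]\ \forall x\in X\}$. $A_{[0,1]}$ separates compact sets and closed sets if for every compact $K$ and closed $C$ with $K\cap C=\emptyset$ there is $f\in A_{[0,1]}$ with $f|_K=1$ and $f|_C=0$. A locally convex topology $\tau$ on a subspace $A\subseteq C(X)$ is compactly localized if for every $\tau$-continuous seminorm $q$ on $A$ there is a compact $K\subseteq X$ such that $q(f)=0$ for all $f\in A$ with $f|_K=0$. *)

theory Defs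
  imports "HOL-Analysis.Analysis" "HOL-Library.FuncSet"
begin

text \<open>The space X is a type 'a with its topology (class t2_space = Hausdorff);
  C(X) consists of the continuous 'k-valued functions on 'a, 'k the scalar field.\<close>

definition Cfun :: "('a::topological_space \<Rightarrow> 'k::real_normed_field) set" where
  "Cfun = {f. continuous_on UNIV f}"

definition compact_open_topology :: "('a::topological_space \<Rightarrow> 'k::real_normed_field) topology" where
  "compact_open_topology = topology (\<lambda>U. U \<subseteq> Cfun \<and>
     (\<forall>f\<in>U. \<exists>K e. compact K \<and> e > 0 \<and>
        {g \<in> Cfun. \<forall>x\<in>K. norm (g x - f x) < e} \<subseteq> U))"

definition unital_subalgebra :: "('a::topological_space \<Rightarrow> 'k::real_normed_field) set \<Rightarrow> bool" where
  "unital_subalgebra A \<longleftrightarrow> A \<subseteq> Cfun \<and> (\<lambda>x. 1) \<in> A \<and>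
     (\<forall>f\<in>A. \<forall>g\<in>A. (\<lambda>x. f x + g x) \<in> A) \<and>
     (\<forall>f\<in>A. \<forall>g\<in>A. (\<lambda>x. f x * g x) \<in> A) \<and>
     (\<forall>c. \<forall>f\<in>A. (\<lambda>x. c * f x) \<in> A)"

definition full_subalgebra :: "('a \<Rightarrow> 'k::real_normed_field) set \<Rightarrow> bool" where
  "full_subalgebra A \<longleftrightarrow> (\<forall>f\<in>A. (\<forall>x. f x \<noteq> 0) \<longrightarrow> (\<lambda>x. inverse (f x)) \<in> A)"

definition self_adjoint :: "('a \<Rightarrow> complex) set \<Rightarrow> bool" where
  "self_adjoint A \<longleftrightarrow> (\<forall>f\<in>A. (\<lambda>x. cnj (f x)) \<in> A)"

definition locally_convex_topology ::
  "('a \<Rightarrow> 'k::real_normed_field) set \<Rightarrow> ('a \<Rightarrow> 'k) topology \<Rightarrow> bool" where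
  "locally_convex_topology A \<tau> \<longleftrightarrow> topspace \<tau> = A \<and>
     continuous_map (prod_topology \<tau> \<tau>) \<tau> (\<lambda>(f,g). \<lambda>x. f x + g x) \<and>
     continuous_map (prod_topology euclidean \<tau>) \<tau> (\<lambda>(c,f). \<lambda>x. c * f x) \<and>
     (\<forall>U. openin \<tau> U \<and> (\<lambda>x. 0) \<in> U \<longrightarrow>
        (\<exists>V. openin \<tau> V \<and> (\<lambda>x. 0) \<in> V \<and> V \<subseteq> U \<and>
             (\<forall>f\<in>V. \<forall>g\<in>V. \<forall>t::real. 0 \<le> t \<and> t \<le> 1 \<longrightarrow>
                (\<lambda>x. of_real t * f x + of_real (1 - t) * g x) \<in> V)))"

definition precompact_in :: "('a \<Rightarrow> 'k::real_normed_field) topology \<Rightarrow> ('a \<Rightarrow> 'k) set \<Rightarrow> bool" where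
  "precompact_in \<tau> B \<longleftrightarrow> B \<subseteq> topspace \<tau> \<and>
     (\<forall>U. openin \<tau> U \<and> (\<lambda>x. 0) \<in> U \<longrightarrow>
        (\<exists>F. finite F \<and> F \<subseteq> topspace \<tau> \<and>
             B \<subseteq> (\<Union>f\<in>F. (\<lambda>g. \<lambda>x. f x + g x) ` U)))"

definition character :: "('a \<Rightarrow> 'k::real_normed_field) set \<Rightarrow> (('a \<Rightarrow> 'k) \<Rightarrow> 'k) \<Rightarrow> bool" where
  "character A \<phi> \<longleftrightarrow> \<phi> \<in> extensional A \<and>
     (\<forall>f\<in>A. \<forall>g\<in>A. \<phi> (\<lambda>x. f x + g x) = \<phi> f + \<phi> g) \<and>
     (\<forall>c. \<forall>f\<in>A. \<phi> (\<lambda>x. c * f x) = c * \<phi> f) \<and>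
     (\<forall>f\<in>A. \<forall>g\<in>A. \<phi> (\<lambda>x. f x * g x) = \<phi> f * \<phi> g) \<and>
     \<phi> (\<lambda>x. 1) = 1"

definition cont_characters ::
  "('a \<Rightarrow> 'k::real_normed_field) set \<Rightarrow> ('a \<Rightarrow> 'k) topology \<Rightarrow> (('a \<Rightarrow> 'k) \<Rightarrow> 'k) set" where
  "cont_characters A \<tau> = {\<phi>. character A \<phi> \<and> continuous_map \<tau> euclidean \<phi>}"

text \<open>Topology on a set S of functionals on (A, tau) induced by the topology of
  A'_c, i.e. uniform convergence on precompact subsets of (A, tau).\<close>
definition ucp_topology ::
  "('a \<Rightarrow> 'k::real_normed_field) topology \<Rightarrow> (('a \<Rightarrow> 'k) \<Rightarrow> 'k) set \<Rightarrow> (('a \<Rightarrow> 'k) \<Rightarrow> 'k) topology" where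
  "ucp_topology \<tau> S = topology (\<lambda>U. U \<subseteq> S \<and>
     (\<forall>\<phi>\<in>U. \<exists>B e. precompact_in \<tau> B \<and> e > 0 \<and>
        {\<psi> \<in> S. \<forall>f\<in>B. norm (\<psi> f - \<phi> f) < e} \<subseteq> U))"

definition separates_compact_closed :: "('a::topological_space \<Rightarrow> 'k::real_normed_field) set \<Rightarrow> bool" where
  "separates_compact_closed A \<longleftrightarrow>
     (\<forall>K C. compact K \<and> closed C \<and> K \<inter> C = {} \<longrightarrow>
        (\<exists>f\<in>A. (\<forall>x. f x \<in> of_real ` {0..1}) \<and> (\<forall>x\<in>K. f x = 1) \<and> (\<forall>x\<in>C. f x = 0)))"

definition seminorm_on :: "('a \<Rightarrow> 'k::real_normed_field) set \<Rightarrow> (('a \<Rightarrow> 'k) \<Rightarrow> real) \<Rightarrow> bool" where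
  "seminorm_on A q \<longleftrightarrow>
     (\<forall>f\<in>A. \<forall>g\<in>A. q (\<lambda>x. f x + g x) \<le> q f + q g) \<and>
     (\<forall>c. \<forall>f\<in>A. q (\<lambda>x. c * f x) = norm c * q f)"

definition compactly_localized ::
  "('a::topological_space \<Rightarrow> 'k::real_normed_field) set \<Rightarrow> ('a \<Rightarrow> 'k) topology \<Rightarrow> bool" where
  "compactly_localized A \<tau> \<longleftrightarrow>
     (\<forall>q. seminorm_on A q \<and> continuous_map \<tau> euclidean q \<longrightarrow>
        (\<exists>K. compact K \<and> (\<forall>f\<in>A. (\<forall>x\<in>K. f x = 0) \<longrightarrow> q f = 0)))"

definition eval_map :: "('a \<Rightarrow> 'k) set \<Rightarrow> 'a \<Rightarrow> (('a \<Rightarrow> 'k) \<Rightarrow> 'k)" where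
  "eval_map A x = restrict (\<lambda>f. f x) A"

end

(*
  The evaluation map x \<mapsto> \<delta>\<^sub>x is continuous because a precompact subset B of (A, \<tau>) is
  equicontinuous on every compact K \<subseteq> X: B is covered by finitely many translates h + W of the
  neighbourhood W of 0 of functions with sup over K below e/3, and the finitely many h are
  continuous. As X is a k-space, continuity on compact sets suffices. It is open onto its image:
  for open W, the characters not vanishing on some f \<in> A with f = 0 off W form an open set that
  meets the image exactly in \<delta>(W).

  For surjectivity, |\<phi>| is a continuous seminorm for a continuous character \<phi>, hence supported on
  a compact K. If \<phi> were no point evaluation at a point of K, each x \<in> K would have some
  h\<^sub>x \<in> ker \<phi> with h\<^sub>x(x) \<noteq> 0, and by compactness a finite sum R of the
  h\<^sub>x * conj h\<^sub>x = |h\<^sub>x|\<^sup>2 lies in ker \<phi> and is positive on K. For u \<in> A with values in [0,1], equal to 1 on K and to 0 where R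
  is small, R + 1 - u is then a nowhere vanishing element of ker \<phi>, impossible in a full algebra.
*)
theory Submission
  imports Defs
begin

section \<open>Topologies of uniform convergence on a family of sets\<close>

definition uniform_on_topology ::
  "('b \<Rightarrow> 'k::real_normed_vector) set \<Rightarrow> 'b set set \<Rightarrow> ('b \<Rightarrow> 'k) topology" where
  "uniform_on_topology S \<B> = topology (\<lambda>U. U \<subseteq> S \<and>
     (\<forall>f\<in>U. \<exists>B e. B \<in> \<B> \<and> e > 0 \<and> {g \<in> S. \<forall>x\<in>B. norm (g x - f x) < e} \<subseteq> U))"

lemma istopology_uniform_on:
  assumes Un: "\<forall>B1\<in>\<B>. \<forall>B2\<in>\<B>. B1 \<union> B2 \<in> \<B>"
  shows "istopology (\<lambda>U. U \<subseteq> S \<and>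
     (\<forall>f\<in>U. \<exists>B e. B \<in> \<B> \<and> e > 0 \<and> {g \<in> S. \<forall>x\<in>B. norm (g x - f x) < e} \<subseteq> U))"
    (is "istopology ?open")
  unfolding istopology_def
proof (rule conjI; intro allI impI)
  fix U V assume U: "?open U" and V: "?open V"
  show "?open (U \<inter> V)"
  proof (intro conjI ballI)
    show "U \<inter> V \<subseteq> S" using U by blast
    fix f assume "f \<in> U \<inter> V"
    then obtain B1 e1 B2 e2 where "B1 \<in> \<B>" "e1 > 0" "{g \<in> S. \<forall>x\<in>B1. norm (g x - f x) < e1} \<subseteq> U"
      and "B2 \<in> \<B>" "e2 > 0" "{g \<in> S. \<forall>x\<in>B2. norm (g x - f x) < e2} \<subseteq> V"
      using U V by (meson IntD1 IntD2)
    then show "\<exists>B e. B \<in> \<B> \<and> e > 0 \<and> {g \<in> S. \<forall>x\<in>B. norm (g x - f x) < e} \<subseteq> U \<inter> V"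
      by (intro exI[of _ "B1 \<union> B2"] exI[of _ "min e1 e2"]) (use Un in auto)
  qed
next
  fix \<U> assume "\<forall>U\<in>\<U>. ?open U"
  then show "?open (\<Union>\<U>)" by (meson Union_least Union_iff Union_upper order_trans)
qed

lemma openin_uniform_on_topology:
  assumes "\<forall>B1\<in>\<B>. \<forall>B2\<in>\<B>. B1 \<union> B2 \<in> \<B>"
  shows "openin (uniform_on_topology S \<B>) U \<longleftrightarrow> U \<subseteq> S \<and>
     (\<forall>f\<in>U. \<exists>B e. B \<in> \<B> \<and> e > 0 \<and> {g \<in> S. \<forall>x\<in>B. norm (g x - f x) < e} \<subseteq> U)"
  using topology_inverse'[OF istopology_uniform_on[OF assms, of S]]
  unfolding uniform_on_topology_def by meson

lemma topspace_uniform_on_topology: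
  assumes "\<forall>B1\<in>\<B>. \<forall>B2\<in>\<B>. B1 \<union> B2 \<in> \<B>" and "B \<in> \<B>"
  shows "topspace (uniform_on_topology S \<B>) = S"
proof (rule subset_antisym)
  show "topspace (uniform_on_topology S \<B>) \<subseteq> S"
    using openin_topspace openin_uniform_on_topology[OF assms(1)] by blast
  show "S \<subseteq> topspace (uniform_on_topology S \<B>)"
    using assms by (intro openin_subset) (auto simp: openin_uniform_on_topology intro: zero_less_one)
qed

lemma continuous_map_uniform_on_eval:
  fixes S :: "('b \<Rightarrow> 'k::real_normed_vector) set"
  assumes Un: "\<forall>B1\<in>\<B>. \<forall>B2\<in>\<B>. B1 \<union> B2 \<in> \<B>" and x: "{x} \<in> \<B>"
  shows "continuous_map (uniform_on_topology S \<B>) euclidean (\<lambda>g. g x)"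
  unfolding continuous_map_def topspace_uniform_on_topology[OF Un x]
proof (intro conjI allI impI)
  fix U :: "'k set" assume "openin euclidean U"
  then have "open U" by simp
  show "openin (uniform_on_topology S \<B>) {g \<in> S. g x \<in> U}"
    unfolding openin_uniform_on_topology[OF Un]
  proof (intro conjI ballI)
    fix f assume "f \<in> {g \<in> S. g x \<in> U}"
    then obtain e where "e > 0" "ball (f x) e \<subseteq> U"
      using \<open>open U\<close> open_contains_ball_eq by blast
    then show "\<exists>B e. B \<in> \<B> \<and> e > 0 \<and> {g \<in> S. \<forall>y\<in>B. norm (g y - f y) < e} \<subseteq> {g \<in> S. g x \<in> U}"
      using x by (intro exI[of _ "{x}"] exI[of _ e]) (auto simp: dist_norm norm_minus_commute)
  qed auto
qed auto

lemma openin_uniform_on_sup_less: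
  fixes S :: "('b \<Rightarrow> 'k::real_normed_vector) set" and e :: real
  assumes Un: "\<forall>B1\<in>\<B>. \<forall>B2\<in>\<B>. B1 \<union> B2 \<in> \<B>" and K: "K \<in> \<B>"
  shows "openin (uniform_on_topology S \<B>) {g \<in> S. \<exists>d<e. \<forall>z\<in>K. norm (g z) \<le> d}"
  unfolding openin_uniform_on_topology[OF Un]
proof (intro conjI ballI)
  fix f assume "f \<in> {g \<in> S. \<exists>d<e. \<forall>z\<in>K. norm (g z) \<le> d}"
  then obtain d where d: "d < e" "\<forall>z\<in>K. norm (f z) \<le> d" by auto
  have "\<exists>d<e. \<forall>z\<in>K. norm (g z) \<le> d" if g: "\<forall>z\<in>K. norm (g z - f z) < (e - d) / 2" for g
  proof (intro exI conjI ballI)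
    show "d + (e - d) / 2 < e" using d(1) by (simp add: field_simps)
    fix z assume "z \<in> K"
    then have "norm (g z - f z) < (e - d) / 2" "norm (f z) \<le> d" using g d(2) by auto
    then show "norm (g z) \<le> d + (e - d) / 2" using norm_triangle_sub[of "g z" "f z"] by linarith
  qed
  then show "\<exists>B e'. B \<in> \<B> \<and> e' > 0 \<and>
      {g \<in> S. \<forall>z\<in>B. norm (g z - f z) < e'} \<subseteq> {g \<in> S. \<exists>d<e. \<forall>z\<in>K. norm (g z) \<le> d}"
    using K d(1) by (intro exI[of _ K] exI[of _ "(e - d) / 2"]) auto
qed auto

lemma compact_open_topology_eq_uniform_on:
  "compact_open_topology = uniform_on_topology Cfun (Collect compact)"
  by (simp add: compact_open_topology_def uniform_on_topology_def)

lemma topspace_compact_open_topology: "topspace compact_open_topology = Cfun"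
  unfolding compact_open_topology_eq_uniform_on
  by (rule topspace_uniform_on_topology[where B = "{}"]) auto

section \<open>Precompact sets and uniform convergence on them\<close>

lemma precompact_in_Un:
  assumes "precompact_in \<tau> B1" "precompact_in \<tau> B2"
  shows "precompact_in \<tau> (B1 \<union> B2)"
  unfolding precompact_in_def
proof (intro conjI allI impI)
  show "B1 \<union> B2 \<subseteq> topspace \<tau>" using assms unfolding precompact_in_def by auto
  fix U assume U: "openin \<tau> U \<and> (\<lambda>x. 0) \<in> U"
  obtain F1 F2 where "finite F1" "F1 \<subseteq> topspace \<tau>" "B1 \<subseteq> (\<Union>f\<in>F1. (\<lambda>g. \<lambda>x. f x + g x) ` U)"
    and "finite F2" "F2 \<subseteq> topspace \<tau>" "B2 \<subseteq> (\<Union>f\<in>F2. (\<lambda>g. \<lambda>x. f x + g x) ` U)"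
    using assms U unfolding precompact_in_def by meson
  then show "\<exists>F. finite F \<and> F \<subseteq> topspace \<tau> \<and> B1 \<union> B2 \<subseteq> (\<Union>f\<in>F. (\<lambda>g. \<lambda>x. f x + g x) ` U)"
    by (intro exI[of _ "F1 \<union> F2"]) auto
qed

lemma precompact_in_Un_closed:
  "\<forall>B1\<in>Collect (precompact_in \<tau>). \<forall>B2\<in>Collect (precompact_in \<tau>).
     B1 \<union> B2 \<in> Collect (precompact_in \<tau>)"
  by (simp add: precompact_in_Un)

lemma precompact_in_singleton:
  assumes "f \<in> topspace \<tau>"
  shows "precompact_in \<tau> {f}"
  unfolding precompact_in_def
proof (intro conjI allI impI)
  fix U assume "openin \<tau> U \<and> (\<lambda>x. 0) \<in> U"
  then have "f \<in> (\<lambda>g. \<lambda>x. f x + g x) ` U" by (intro image_eqI[of _ _ "\<lambda>x. 0"]) auto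
  then show "\<exists>F. finite F \<and> F \<subseteq> topspace \<tau> \<and> {f} \<subseteq> (\<Union>f\<in>F. (\<lambda>g. \<lambda>x. f x + g x) ` U)"
    using assms by (intro exI[of _ "{f}"]) auto
qed (use assms in auto)

lemma ucp_topology_eq_uniform_on:
  "ucp_topology \<tau> S = uniform_on_topology S (Collect (precompact_in \<tau>))"
  by (simp add: ucp_topology_def uniform_on_topology_def)

lemma openin_ucp_topology:
  "openin (ucp_topology \<tau> S) U \<longleftrightarrow> U \<subseteq> S \<and>
     (\<forall>\<phi>\<in>U. \<exists>B e. precompact_in \<tau> B \<and> e > 0 \<and> {\<psi> \<in> S. \<forall>f\<in>B. norm (\<psi> f - \<phi> f) < e} \<subseteq> U)"
  by (simp add: ucp_topology_eq_uniform_on openin_uniform_on_topology[OF precompact_in_Un_closed])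

lemma topspace_ucp_topology: "topspace (ucp_topology \<tau> S) = S"
  unfolding ucp_topology_eq_uniform_on
  by (rule topspace_uniform_on_topology[OF precompact_in_Un_closed, where B = "{}"])
    (auto simp: precompact_in_def intro!: exI[of _ "{}"])

lemma openin_ucp_topology_nonzero:
  assumes "f \<in> topspace \<tau>"
  shows "openin (ucp_topology \<tau> S) {\<psi> \<in> S. \<psi> f \<noteq> 0}"
proof -
  have f: "{f} \<in> Collect (precompact_in \<tau>)" using precompact_in_singleton[OF assms] by simp
  show ?thesis
    using openin_continuous_map_preimage[OF
        continuous_map_uniform_on_eval[OF precompact_in_Un_closed f, where S = S], of "-{0}"]
    by (simp add: ucp_topology_eq_uniform_on topspace_uniform_on_topology[OF precompact_in_Un_closed f] open_Compl)
qed

lemma precompact_in_equicontinuous_on_compact: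
  fixes \<tau> :: "('a::topological_space \<Rightarrow> 'k::real_normed_field) topology"
  assumes inc: "continuous_map \<tau> compact_open_topology id" and zero: "(\<lambda>x. 0) \<in> topspace \<tau>"
    and K: "compact K" and B: "precompact_in \<tau> B" and e: "e > 0" and x: "x \<in> K"
  shows "\<exists>V. open V \<and> x \<in> V \<and> (\<forall>y\<in>K \<inter> V. \<forall>f\<in>B. norm (f y - f x) < e)"
proof -
  have \<tau>_Cfun: "topspace \<tau> \<subseteq> Cfun"
    using continuous_map_image_subset_topspace[OF inc] by (simp add: topspace_compact_open_topology)
  define W where "W = {g \<in> (Cfun :: ('a \<Rightarrow> 'k) set). \<exists>d<e/3. \<forall>z\<in>K. norm (g z) \<le> d}"
  have "openin compact_open_topology W"
    unfolding W_def compact_open_topology_eq_uniform_on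
    using K by (intro openin_uniform_on_sup_less) auto
  then have "openin \<tau> {f \<in> topspace \<tau>. f \<in> W}"
    using openin_continuous_map_preimage[OF inc] by simp
  moreover have "(\<lambda>x. 0) \<in> {f \<in> topspace \<tau>. f \<in> W}"
    unfolding W_def using zero \<tau>_Cfun e by (auto intro!: exI[of _ 0])
  ultimately obtain F where F: "finite F" "F \<subseteq> topspace \<tau>"
      "B \<subseteq> (\<Union>h\<in>F. (\<lambda>g. \<lambda>x. h x + g x) ` {f \<in> topspace \<tau>. f \<in> W})"
    using B unfolding precompact_in_def by meson
  define V where "V = (\<Inter>h\<in>F. {y. norm (h y - h x) < e/3})"
  have "open V"
    unfolding V_def using F(1,2) \<tau>_Cfun
    by (intro open_INT ballI open_Collect_less continuous_intros) (auto simp: Cfun_def)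
  moreover have "x \<in> V" unfolding V_def using e by auto
  moreover have "norm (f y - f x) < e" if y: "y \<in> K \<inter> V" and f: "f \<in> B" for y f
  proof -
    obtain h g where h: "h \<in> F" and g: "g \<in> W" and f_eq: "f = (\<lambda>x. h x + g x)"
      using F(3) f by blast
    obtain d where d: "d < e/3" "\<forall>z\<in>K. norm (g z) \<le> d" using g unfolding W_def by auto
    have "norm (f y - f x) \<le> norm (h y - h x) + norm (g y) + norm (g x)"
      unfolding f_eq using norm_triangle_ineq[of "h y - h x" "g y - g x"] norm_triangle_ineq4[of "g y" "g x"]
      by (simp add: algebra_simps)
    moreover have "norm (h y - h x) < e/3" using y h unfolding V_def by auto
    moreover have "norm (g y) \<le> d" "norm (g x) \<le> d" using d y x by auto
    ultimately show ?thesis using d(1) by linarith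
  qed
  ultimately show ?thesis by blast
qed

section \<open>The evaluation map is an embedding\<close>

lemma
  assumes "unital_subalgebra A"
  shows unital_subalgebra_Cfun: "f \<in> A \<Longrightarrow> f \<in> Cfun"
    and unital_subalgebra_one: "(\<lambda>x. 1) \<in> A"
    and unital_subalgebra_add: "f \<in> A \<Longrightarrow> g \<in> A \<Longrightarrow> (\<lambda>x. f x + g x) \<in> A"
    and unital_subalgebra_mult: "f \<in> A \<Longrightarrow> g \<in> A \<Longrightarrow> (\<lambda>x. f x * g x) \<in> A"
    and unital_subalgebra_scale: "f \<in> A \<Longrightarrow> (\<lambda>x. c * f x) \<in> A"
  using assms unfolding unital_subalgebra_def by auto

lemma unital_subalgebra_const: "unital_subalgebra A \<Longrightarrow> (\<lambda>x. c) \<in> A"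
  using unital_subalgebra_scale[OF _ unital_subalgebra_one, of A c] by simp

lemma
  assumes "character A \<phi>"
  shows character_add: "f \<in> A \<Longrightarrow> g \<in> A \<Longrightarrow> \<phi> (\<lambda>x. f x + g x) = \<phi> f + \<phi> g"
    and character_scale: "f \<in> A \<Longrightarrow> \<phi> (\<lambda>x. c * f x) = c * \<phi> f"
    and character_mult: "f \<in> A \<Longrightarrow> g \<in> A \<Longrightarrow> \<phi> (\<lambda>x. f x * g x) = \<phi> f * \<phi> g"
    and character_one: "\<phi> (\<lambda>x. 1) = 1"
  using assms unfolding character_def by auto

lemma character_const: "unital_subalgebra A \<Longrightarrow> character A \<phi> \<Longrightarrow> \<phi> (\<lambda>x. c) = c"
  using character_scale[of A \<phi> "\<lambda>x. 1" c] character_one[of A \<phi>] unital_subalgebra_one[of A] by simp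

lemma separates_compact_closedE:
  assumes "separates_compact_closed A" "compact K" "closed C" "K \<inter> C = {}"
  obtains f where "f \<in> A" "\<forall>x. f x \<in> of_real ` {0..1}" "\<forall>x\<in>K. f x = 1" "\<forall>x\<in>C. f x = 0"
  using assms unfolding separates_compact_closed_def by meson

lemma eval_map_character: "unital_subalgebra A \<Longrightarrow> character A (eval_map A x)"
  unfolding character_def eval_map_def
  by (simp add: unital_subalgebra_add unital_subalgebra_mult unital_subalgebra_scale unital_subalgebra_one)

lemma eval_map_continuous:
  assumes inc: "continuous_map \<tau> compact_open_topology id" and top: "topspace \<tau> = A"
  shows "continuous_map \<tau> euclidean (eval_map A x)"
proof -
  have "continuous_map compact_open_topology euclidean (\<lambda>g. g x)"
    unfolding compact_open_topology_eq_uniform_on by (rule continuous_map_uniform_on_eval) auto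
  then have "continuous_map \<tau> euclidean ((\<lambda>g. g x) \<circ> id)" by (rule continuous_map_compose[OF inc])
  then show ?thesis by (rule continuous_map_eq) (simp add: eval_map_def top)
qed

lemma continuous_map_eval_map_ucp:
  fixes A :: "('a::topological_space \<Rightarrow> 'k::real_normed_field) set"
  assumes kX: "k_space (euclidean :: 'a topology)" and inc: "continuous_map \<tau> compact_open_topology id"
    and top: "topspace \<tau> = A" and zero: "(\<lambda>x. 0) \<in> A" and S: "range (eval_map A) \<subseteq> S"
  shows "continuous_map euclidean (ucp_topology \<tau> S) (eval_map A)"
proof (rule continuous_map_from_k_space[OF kX])
  fix K :: "'a set" assume "compactin euclidean K"
  then have K: "compact K" by simp
  show "continuous_map (subtopology euclidean K) (ucp_topology \<tau> S) (eval_map A)"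
    unfolding continuous_map_def
  proof (intro conjI allI impI)
    show "eval_map A \<in> topspace (subtopology euclidean K) \<rightarrow> topspace (ucp_topology \<tau> S)"
      using S by (auto simp: topspace_ucp_topology)
    fix U assume U: "openin (ucp_topology \<tau> S) U"
    show "openin (subtopology euclidean K) {x \<in> topspace (subtopology euclidean K). eval_map A x \<in> U}"
    proof (subst openin_subopen, intro ballI)
      fix x assume "x \<in> {x \<in> topspace (subtopology euclidean K). eval_map A x \<in> U}"
      then have x: "x \<in> K" "eval_map A x \<in> U" by auto
      then obtain B e where B: "precompact_in \<tau> B" "e > 0"
        "{\<psi> \<in> S. \<forall>f\<in>B. norm (\<psi> f - eval_map A x f) < e} \<subseteq> U"
        using U unfolding openin_ucp_topology by meson
      obtain V where V: "open V" "x \<in> V" "\<forall>y\<in>K \<inter> V. \<forall>f\<in>B. norm (f y - f x) < e"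
        using precompact_in_equicontinuous_on_compact[OF inc _ K B(1,2) x(1)] zero top by auto
      have "B \<subseteq> A" using B(1) top unfolding precompact_in_def by auto
      then have "eval_map A ` (K \<inter> V) \<subseteq> U"
        using B(3) V(3) S by (force simp: eval_map_def)
      then show "\<exists>T. openin (subtopology euclidean K) T \<and> x \<in> T \<and>
          T \<subseteq> {x \<in> topspace (subtopology euclidean K). eval_map A x \<in> U}"
        using V(1,2) x(1)
        by (intro exI[of _ "K \<inter> V"]) (auto simp: openin_subtopology_Int_subset openin_open_Int)
    qed
  qed
qed

lemma inj_eval_map:
  fixes A :: "('a::t1_space \<Rightarrow> 'k::real_normed_field) set"
  assumes "separates_compact_closed A"
  shows "inj (eval_map A)"
proof (rule injI)
  fix x y assume eq: "eval_map A x = eval_map A y"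
  show "x = y"
  proof (rule ccontr)
    assume "x \<noteq> y"
    then have "{x} \<inter> {y} = {}" by simp
    then obtain f where "f \<in> A" "\<forall>z\<in>{x}. f z = 1" "\<forall>z\<in>{y}. f z = 0"
      by (rule separates_compact_closedE[OF assms compact_sing closed_singleton])
    then show False using fun_cong[OF eq, of f] by (simp add: eval_map_def)
  qed
qed

lemma open_map_eval_map_ucp:
  assumes sep: "separates_compact_closed A" and top: "topspace \<tau> = A" and S: "range (eval_map A) \<subseteq> S"
  shows "open_map euclidean (subtopology (ucp_topology \<tau> S) (range (eval_map A))) (eval_map A)"
  unfolding open_map_def
proof (intro allI impI)
  fix W :: "'a set" assume "openin euclidean W"
  define Z where "Z = {f \<in> A. \<forall>y\<in>-W. f y = 0}"
  define T where "T = (\<Union>f\<in>Z. {\<psi> \<in> S. \<psi> f \<noteq> 0})"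
  have "openin (ucp_topology \<tau> S) T"
    unfolding T_def Z_def by (intro openin_Union) (auto simp: top intro!: openin_ucp_topology_nonzero)
  moreover have "eval_map A ` W = T \<inter> range (eval_map A)"
  proof
    show "eval_map A ` W \<subseteq> T \<inter> range (eval_map A)"
    proof (rule image_subsetI)
      fix y assume "y \<in> W"
      with \<open>openin euclidean W\<close> have "closed (-W)" "{y} \<inter> -W = {}" by auto
      then obtain f where "f \<in> A" "\<forall>z\<in>{y}. f z = 1" "\<forall>z\<in>-W. f z = 0"
        by (rule separates_compact_closedE[OF sep compact_sing])
      then show "eval_map A y \<in> T \<inter> range (eval_map A)"
        unfolding T_def Z_def using S by (auto simp: eval_map_def)
    qed
    show "T \<inter> range (eval_map A) \<subseteq> eval_map A ` W"
      unfolding T_def Z_def by (auto simp: eval_map_def)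
  qed
  ultimately show "openin (subtopology (ucp_topology \<tau> S) (range (eval_map A))) (eval_map A ` W)"
    by (auto simp: openin_subtopology)
qed

lemma homeomorphic_map_eval_map_ucp:
  fixes A :: "('a::t1_space \<Rightarrow> 'k::real_normed_field) set"
  assumes "k_space (euclidean :: 'a topology)" and "continuous_map \<tau> compact_open_topology id"
    and "topspace \<tau> = A" and "(\<lambda>x. 0) \<in> A" and "separates_compact_closed A"
    and "range (eval_map A) \<subseteq> S"
  shows "homeomorphic_map euclidean (subtopology (ucp_topology \<tau> S) (range (eval_map A))) (eval_map A)"
proof (rule bijective_open_imp_homeomorphic_map)
  show "continuous_map euclidean (subtopology (ucp_topology \<tau> S) (range (eval_map A))) (eval_map A)"
    using continuous_map_eval_map_ucp[OF assms(1-4,6)] by (simp add: continuous_map_in_subtopology)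
  show "open_map euclidean (subtopology (ucp_topology \<tau> S) (range (eval_map A))) (eval_map A)"
    using open_map_eval_map_ucp[OF assms(5,3,6)] .
  show "eval_map A ` topspace euclidean = topspace (subtopology (ucp_topology \<tau> S) (range (eval_map A)))"
    using assms(6) by (auto simp: topspace_ucp_topology)
  show "inj_on (eval_map A) (topspace euclidean)"
    using inj_eval_map[OF assms(5)] by simp
qed

section \<open>Continuous characters are point evaluations\<close>

lemma character_sum:
  assumes A: "unital_subalgebra A" and \<phi>: "character A \<phi>" and "finite I" and "\<forall>i\<in>I. p i \<in> A"
  shows "(\<lambda>y. \<Sum>i\<in>I. p i y) \<in> A \<and> \<phi> (\<lambda>y. \<Sum>i\<in>I. p i y) = (\<Sum>i\<in>I. \<phi> (p i))"
  using assms(3,4)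
proof (induction I rule: finite_induct)
  case empty
  then show ?case using unital_subalgebra_const[OF A] character_const[OF A \<phi>] by simp
next
  case (insert i I)
  then show ?case by (simp add: unital_subalgebra_add[OF A] character_add[OF \<phi>])
qed

lemma character_nonzero_if_nowhere_zero:
  assumes "full_subalgebra A" and \<phi>: "character A \<phi>" and f: "f \<in> A" and nz: "\<forall>x. f x \<noteq> 0"
  shows "\<phi> f \<noteq> 0"
proof
  assume "\<phi> f = 0"
  have inv: "(\<lambda>x. inverse (f x)) \<in> A" using assms(1) f nz unfolding full_subalgebra_def by blast
  have "1 = \<phi> (\<lambda>x. f x * inverse (f x))" using nz character_one[OF \<phi>] by simp
  also have "\<dots> = \<phi> f * \<phi> (\<lambda>x. inverse (f x))" by (rule character_mult[OF \<phi> f inv])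
  finally show False using \<open>\<phi> f = 0\<close> by simp
qed

lemma character_eq_eval_map:
  assumes "character A \<phi>" and "\<forall>f\<in>A. \<phi> f = f x"
  shows "\<phi> = eval_map A x"
  using assms extensional_arb[of \<phi> A] unfolding character_def eval_map_def by (auto simp: fun_eq_iff)

lemma compact_positive_bounded_below:
  fixes R :: "'a::topological_space \<Rightarrow> real"
  assumes "compact K" and "continuous_on K R" and "\<forall>y\<in>K. R y > 0"
  obtains d where "d > 0" and "\<forall>y\<in>K. d < R y"
proof (cases "K = {}")
  case False
  then obtain x where "x \<in> K" "\<forall>y\<in>K. R x \<le> R y" using continuous_attains_inf assms(1,2) by blast
  then show ?thesis using that[of "R x / 2"] assms(3) by fastforce
qed (use that[of 1] in simp)

(* cj is the identity for real scalars and complex conjugation for complex ones. *)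
locale full_conj_algebra =
  fixes A :: "('a::topological_space \<Rightarrow> 'k::real_normed_field) set" and cj :: "'k \<Rightarrow> 'k"
  assumes subalgebra: "unital_subalgebra A" and full: "full_subalgebra A"
    and conj_closed: "\<And>f. f \<in> A \<Longrightarrow> (\<lambda>x. cj (f x)) \<in> A"
    and mult_conj: "\<And>z. z * cj z = of_real ((norm z)\<^sup>2)"
begin

lemma kernel_sum_of_squares:
  assumes \<phi>: "character A \<phi>" and K: "compact K"
    and ker: "\<forall>x\<in>K. \<exists>h\<in>A. \<phi> h = 0 \<and> h x \<noteq> 0"
  obtains R where "(\<lambda>y. of_real (R y)) \<in> A" "\<phi> (\<lambda>y. of_real (R y)) = 0" "continuous_on UNIV R"
    "\<forall>y. R y \<ge> 0" "\<forall>y\<in>K. R y > 0"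
proof -
  obtain h where h: "\<And>x. x \<in> K \<Longrightarrow> h x \<in> A \<and> \<phi> (h x) = 0 \<and> h x x \<noteq> 0"
    using ker by (metis (no_types))
  have cont: "continuous_on UNIV (h x)" if "x \<in> K" for x
    using h[OF that] unital_subalgebra_Cfun[OF subalgebra] by (simp add: Cfun_def)
  have "open {y. h x y \<noteq> 0}" if "x \<in> K" for x
    using cont[OF that] by (intro open_Collect_neq) auto
  moreover have "K \<subseteq> (\<Union>x\<in>K. {y. h x y \<noteq> 0})" using h by blast
  ultimately obtain C where C: "C \<subseteq> K" "finite C" "K \<subseteq> (\<Union>x\<in>C. {y. h x y \<noteq> 0})"
    using compactE_image[OF K, of K "\<lambda>x. {y. h x y \<noteq> 0}"] by blast
  define R where "R y = (\<Sum>x\<in>C. (norm (h x y))\<^sup>2)" for y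
  have R_eq: "(\<lambda>y. of_real (R y)) = (\<lambda>y. \<Sum>x\<in>C. h x y * cj (h x y))"
    by (simp add: R_def mult_conj of_real_sum)
  have sq_in_A: "\<forall>x\<in>C. (\<lambda>y. h x y * cj (h x y)) \<in> A"
  proof
    fix x assume "x \<in> C"
    then have "h x \<in> A" using C(1) h by blast
    then show "(\<lambda>y. h x y * cj (h x y)) \<in> A"
      using unital_subalgebra_mult[OF subalgebra _ conj_closed] by blast
  qed
  have sq_in_ker: "\<phi> (\<lambda>y. h x y * cj (h x y)) = 0" if "x \<in> C" for x
    using C(1) that h character_mult[OF \<phi>] conj_closed by auto
  show ?thesis
  proof
    show "(\<lambda>y. of_real (R y)) \<in> A" "\<phi> (\<lambda>y. of_real (R y)) = 0"
      unfolding R_eq using character_sum[OF subalgebra \<phi> C(2) sq_in_A] sq_in_ker by simp_all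
    show "continuous_on UNIV R" unfolding R_def using C(1) cont by (intro continuous_intros) auto
    show "\<forall>y. R y \<ge> 0" unfolding R_def by (simp add: sum_nonneg)
    show "\<forall>y\<in>K. R y > 0"
    proof
      fix y assume y: "y \<in> K"
      obtain x where "x \<in> C" "h x y \<noteq> 0" using C(3) y by blast
      then show "R y > 0" unfolding R_def by (intro sum_pos2[OF C(2)]) auto
    qed
  qed
qed

lemma kernel_nowhere_zero_element:
  assumes sep: "separates_compact_closed A" and \<phi>: "character A \<phi>" and K: "compact K"
    and vanish: "\<forall>f\<in>A. (\<forall>x\<in>K. f x = 0) \<longrightarrow> \<phi> f = 0"
    and ker: "\<forall>x\<in>K. \<exists>h\<in>A. \<phi> h = 0 \<and> h x \<noteq> 0"
  obtains G where "G \<in> A" "\<phi> G = 0" "\<forall>y. G y \<noteq> 0"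
proof -
  obtain R where R: "(\<lambda>y. of_real (R y)) \<in> A" "\<phi> (\<lambda>y. of_real (R y)) = 0" "continuous_on UNIV R"
      "\<forall>y. R y \<ge> 0" "\<forall>y\<in>K. R y > 0"
    by (rule kernel_sum_of_squares[OF \<phi> K ker])
  obtain d where d: "d > 0" "\<forall>y\<in>K. d < R y"
    by (rule compact_positive_bounded_below[OF K continuous_on_subset[OF R(3) subset_UNIV] R(5)])
  have "closed {y. R y \<le> d}" using R(3) by (intro closed_Collect_le continuous_intros) auto
  moreover have "K \<inter> {y. R y \<le> d} = {}" using d(2) by force
  ultimately obtain u where u: "u \<in> A" "\<forall>y. u y \<in> of_real ` {0..1}" "\<forall>y\<in>K. u y = 1"
      "\<forall>y\<in>{y. R y \<le> d}. u y = 0"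
    by (rule separates_compact_closedE[OF sep K])
  define v where "v = (\<lambda>y. 1 + (-1) * u y)"
  have v: "v \<in> A" unfolding v_def
    by (intro unital_subalgebra_add[OF subalgebra] unital_subalgebra_one[OF subalgebra]
        unital_subalgebra_scale[OF subalgebra u(1)])
  have "\<phi> v = 0" using vanish v u(3) unfolding v_def by simp
  show ?thesis
  proof
    show "(\<lambda>y. of_real (R y) + v y) \<in> A" using unital_subalgebra_add[OF subalgebra R(1) v] .
    show "\<phi> (\<lambda>y. of_real (R y) + v y) = 0"
      using character_add[OF \<phi> R(1) v] R(2) \<open>\<phi> v = 0\<close> by simp
    show "\<forall>y. of_real (R y) + v y \<noteq> 0"
    proof
      fix y
      obtain t where t: "t \<in> {0..1}" "u y = of_real t" using u(2) by blast
      have pos: "R y + 1 - t > 0"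
      proof (cases "R y \<le> d")
        case True
        then show ?thesis using u(4) t R(4) by (auto simp: add_nonneg_pos)
      next
        case False
        then show ?thesis using d(1) t(1) by simp
      qed
      have "of_real (R y) + v y = (of_real (R y + 1 - t) :: 'k)" by (simp add: v_def t(2))
      also have "\<dots> \<noteq> 0" using pos unfolding of_real_eq_0_iff by linarith
      finally show "of_real (R y) + v y \<noteq> 0" .
    qed
  qed
qed

lemma localized_character_in_eval_map_image:
  assumes sep: "separates_compact_closed A" and \<phi>: "character A \<phi>" and K: "compact K"
    and vanish: "\<forall>f\<in>A. (\<forall>x\<in>K. f x = 0) \<longrightarrow> \<phi> f = 0"
  shows "\<phi> \<in> eval_map A ` K"
proof (rule ccontr)
  assume not_eval: "\<phi> \<notin> eval_map A ` K"
  have ker: "\<forall>x\<in>K. \<exists>h\<in>A. \<phi> h = 0 \<and> h x \<noteq> 0"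
  proof
    fix x assume x: "x \<in> K"
    obtain g where g: "g \<in> A" "\<phi> g \<noteq> g x"
      using character_eq_eval_map[OF \<phi>] not_eval x by blast
    have c: "(\<lambda>y. - \<phi> g) \<in> A" by (rule unital_subalgebra_const[OF subalgebra])
    show "\<exists>h\<in>A. \<phi> h = 0 \<and> h x \<noteq> 0"
    proof (intro bexI conjI)
      show "(\<lambda>y. g y + - \<phi> g) \<in> A" using unital_subalgebra_add[OF subalgebra g(1) c] .
      show "\<phi> (\<lambda>y. g y + - \<phi> g) = 0"
        using character_add[OF \<phi> g(1) c] character_const[OF subalgebra \<phi>] by simp
      show "g x + - \<phi> g \<noteq> 0" using g(2) by simp
    qed
  qed
  obtain G where G: "G \<in> A" "\<phi> G = 0" "\<forall>y. G y \<noteq> 0"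
    by (rule kernel_nowhere_zero_element[OF sep \<phi> K vanish ker])
  then show False using character_nonzero_if_nowhere_zero[OF full \<phi> G(1,3)] by simp
qed

lemma cont_character_in_range_eval_map:
  assumes sep: "separates_compact_closed A" and loc: "compactly_localized A \<tau>"
    and \<phi>: "\<phi> \<in> cont_characters A \<tau>"
  shows "\<phi> \<in> range (eval_map A)"
proof -
  have ch: "character A \<phi>" and cont: "continuous_map \<tau> euclidean \<phi>"
    using \<phi> unfolding cont_characters_def by auto
  have "seminorm_on A (\<lambda>f. norm (\<phi> f))"
    by (simp add: seminorm_on_def character_add[OF ch] character_scale[OF ch] norm_triangle_ineq norm_mult)
  moreover have "continuous_map \<tau> euclidean (\<lambda>f. norm (\<phi> f))"
    using continuous_map_norm[OF cont] by simp
  ultimately obtain K where K: "compact K" "\<forall>f\<in>A. (\<forall>x\<in>K. f x = 0) \<longrightarrow> norm (\<phi> f) = 0"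
    using loc unfolding compactly_localized_def by blast
  have "\<phi> \<in> eval_map A ` K"
    using localized_character_in_eval_map_image[OF sep ch K(1)] K(2) by simp
  then show ?thesis by blast
qed

end

lemma eval_map_homeomorphism:
  fixes A :: "('a::t1_space \<Rightarrow> 'k::real_normed_field) set"
  assumes kX: "k_space (euclidean :: 'a topology)" and alg: "full_conj_algebra A cj"
    and inc: "continuous_map \<tau> compact_open_topology id" and top: "topspace \<tau> = A"
    and sep: "separates_compact_closed A"
  shows "(\<forall>x. eval_map A x \<in> cont_characters A \<tau>) \<and>
    homeomorphic_map euclidean
      (subtopology (ucp_topology \<tau> (cont_characters A \<tau>)) (range (eval_map A))) (eval_map A) \<and>
    (compactly_localized A \<tau> \<longrightarrow>
      range (eval_map A) = cont_characters A \<tau> \<and>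
      homeomorphic_map euclidean (ucp_topology \<tau> (cont_characters A \<tau>)) (eval_map A))"
proof -
  have sub: "unital_subalgebra A" using alg by (rule full_conj_algebra.subalgebra)
  have cont_char: "eval_map A x \<in> cont_characters A \<tau>" for x
    unfolding cont_characters_def using eval_map_character[OF sub] eval_map_continuous[OF inc top] by simp
  then have "homeomorphic_map euclidean
      (subtopology (ucp_topology \<tau> (cont_characters A \<tau>)) (range (eval_map A))) (eval_map A)"
    by (intro homeomorphic_map_eval_map_ucp[OF kX inc top unital_subalgebra_const[OF sub] sep]) auto
  moreover have "range (eval_map A) = cont_characters A \<tau>" if "compactly_localized A \<tau>"
    using cont_char full_conj_algebra.cont_character_in_range_eval_map[OF alg sep that] by blast
  ultimately show ?thesis
    using cont_char by (metis subtopology_topspace topspace_ucp_topology)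
qed

theorem theorem6p13:
  assumes "k_space (euclidean :: ('a::t2_space) topology)"
  shows
   "(\<forall>(A :: ('a \<Rightarrow> real) set) \<tau>.
       unital_subalgebra A \<and> full_subalgebra A \<and>
       locally_convex_topology A \<tau> \<and> continuous_map \<tau> compact_open_topology id \<and>
       separates_compact_closed A \<longrightarrow>
         (\<forall>x. eval_map A x \<in> cont_characters A \<tau>) \<and>
         homeomorphic_map euclidean
           (subtopology (ucp_topology \<tau> (cont_characters A \<tau>)) (range (eval_map A))) (eval_map A) \<and>
         (compactly_localized A \<tau> \<longrightarrow>
            range (eval_map A) = cont_characters A \<tau> \<and>
            homeomorphic_map euclidean (ucp_topology \<tau> (cont_characters A \<tau>)) (eval_map A)))
    \<and>
    (\<forall>(A :: ('a \<Rightarrow> complex) set) \<tau>.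
       unital_subalgebra A \<and> full_subalgebra A \<and> self_adjoint A \<and>
       locally_convex_topology A \<tau> \<and> continuous_map \<tau> compact_open_topology id \<and>
       separates_compact_closed A \<longrightarrow>
         (\<forall>x. eval_map A x \<in> cont_characters A \<tau>) \<and>
         homeomorphic_map euclidean
           (subtopology (ucp_topology \<tau> (cont_characters A \<tau>)) (range (eval_map A))) (eval_map A) \<and>
         (compactly_localized A \<tau> \<longrightarrow>
            range (eval_map A) = cont_characters A \<tau> \<and>
            homeomorphic_map euclidean (ucp_topology \<tau> (cont_characters A \<tau>)) (eval_map A)))"
proof -
  have real: "full_conj_algebra A (\<lambda>z. z)"
    if "unital_subalgebra A" "full_subalgebra A" for A :: "('a \<Rightarrow> real) set"
    using that by unfold_locales (simp_all add: power2_eq_square)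
  have complex: "full_conj_algebra A cnj"
    if "unital_subalgebra A" "full_subalgebra A" "self_adjoint A" for A :: "('a \<Rightarrow> complex) set"
    using that complex_norm_square[symmetric] unfolding full_conj_algebra_def self_adjoint_def by blast
  show ?thesis
    by (rule conjI; intro allI impI; elim conjE; rule eval_map_homeomorphism[OF assms])
      (auto intro: real complex simp: locally_convex_topology_def)
qed

end
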